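(* Let $J:[0,1]\to[0,\infty)$ with $\int_{\mathbb{Z}_p}J(|x|_p)dx=1$ (extended by zero outside $\mathbb{Z}_p$), with radial Fourier transform $\widehat J(|\xi|_p)$, and let $\boldsymbol{J}\varphi=J(|x|_p)\ast\varphi-\varphi$ on $L^2(\mathbb{Z}_p)$. For $r\in\mathbb{Z}$, $b\in\mathbb{Q}_p/\mathbb{Z}_p$, $k\in\{1,\dots,p-1\}$ let $\Psi_{rbk}(x)=p^{-r/2}\chi_p(p^{-1}k(p^rx-b))\Omega(|p^rx-b|_p)$. Then: (i) for $k\in\{1,\dots,p-1\}$, $r\le0$ and $b\in\mathbb{Q}_p/\mathbb{Z}_p$ with $bp^{-r}\in\mathbb{Z}_p$, $\boldsymbol{J}\Psi_{rbk}(x)=(\widehat J(p^{1-r})-1)\Psi_{rbk}(x)$, where $\widehat J(p^{1-r})$ is the value of $\widehat J$ at $|\xi|_p=p^{1-r}$; (ii) $\boldsymbol{J}\Omega(|x|_p)=0$.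
   Context: $p$ is a fixed prime; Haar measure with $\int_{\mathbb{Z}_p}dx=1$; $\chi_p(y)=\exp(2\pi i\{y\}_p)$ with $\{y\}_p$ the $p$-adic fractional part; $\mathbb{Q}_p/\mathbb{Z}_p$ is identified with the set of finite sums $\sum_{j=-m}^{-1}x_jp^j$, $x_j\in\{0,\dots,p-1\}$. $\Omega(|p^rx-b|_p)$ is the characteristic function of the ball $bp^{-r}+p^{-r}\mathbb{Z}_p$, and $\Omega(|x|_p)$ that of $\mathbb{Z}_p$. Fourier transform $\mathcal{F}\varphi(\xi)=\int\chi_p(\xi x)\varphi(x)dx$. *)

theory Defs
  imports "HOL-Probability.Probability"
begin

text \<open>p-adic integers are modelled by their digit sequences: x :: nat \<Rightarrow> nat with
  x = sum x_i p^i, all x_i < p.  The normalized Haar measure on Z_p is the product of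
  uniform measures on the digits.\<close>

definition Haar :: "nat \<Rightarrow> (nat \<Rightarrow> nat) measure" where
  "Haar p = (\<Pi>\<^sub>M i\<in>(UNIV::nat set). uniform_count_measure {..<p})"

text \<open>x mod p^n, as a natural number in [0, p^n).\<close>
definition zp_trunc :: "nat \<Rightarrow> nat \<Rightarrow> (nat \<Rightarrow> nat) \<Rightarrow> nat" where
  "zp_trunc p n x = (\<Sum>i<n. x i * p ^ i)"

definition zp_sub :: "nat \<Rightarrow> (nat \<Rightarrow> nat) \<Rightarrow> (nat \<Rightarrow> nat) \<Rightarrow> (nat \<Rightarrow> nat)" where
  "zp_sub p x y = (\<lambda>i. nat ((int (zp_trunc p (Suc i) x) - int (zp_trunc p (Suc i) y))
                        mod int (p ^ Suc i)) div p ^ i)"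

definition zp_shift :: "nat \<Rightarrow> (nat \<Rightarrow> nat) \<Rightarrow> (nat \<Rightarrow> nat)" where
  "zp_shift j x = (\<lambda>i. if i < j then 0 else x (i - j))"

definition zp_of_nat :: "nat \<Rightarrow> nat \<Rightarrow> (nat \<Rightarrow> nat)" where
  "zp_of_nat p a = (\<lambda>i. (a div p ^ i) mod p)"

definition padic_abs :: "nat \<Rightarrow> (nat \<Rightarrow> nat) \<Rightarrow> real" where
  "padic_abs p x = (if (\<forall>i. x i = 0) then 0 else real p powr (- real (LEAST i. x i \<noteq> 0)))"

text \<open>Q_p/Z_p identified with finite sums sum_{j=-m}^{-1} x_j p^j, i.e. the rationals a/p^n,
  0 \<le> a < p^n.\<close>
definition QpZp :: "nat \<Rightarrow> rat set" where
  "QpZp p = {q. \<exists>a n. a < p ^ n \<and> q = of_nat a / of_nat (p ^ n)}"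

definition rat_in_Zp :: "nat \<Rightarrow> rat \<Rightarrow> bool" where
  "rat_in_Zp p q = coprime (snd (quotient_of q)) (int p)"

text \<open>Writing p^r x - b = p^{-N} w with w = p^{r+N} x - b p^N in Z_p (N large), one has
  Omega(|p^r x - b|_p) = [w in p^N Z_p] and
  chi_p(p^{-1} k p^{-N} w) = exp(2 pi i k (w mod p^{N+1}) / p^{N+1}).\<close>
definition Psi :: "nat \<Rightarrow> int \<Rightarrow> rat \<Rightarrow> nat \<Rightarrow> (nat \<Rightarrow> nat) \<Rightarrow> complex" where
  "Psi p r b k x =
     (let N = (LEAST N::nat. - r \<le> int N \<and> b * of_nat (p ^ N) \<in> \<int>);
          a = nat \<lfloor>b * of_nat (p ^ N)\<rfloor>;
          w = zp_sub p (zp_shift (nat (r + int N)) x) (zp_of_nat p a)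
      in complex_of_real (real p powr (- real_of_int r / 2)) *
         (if zp_trunc p N w = 0
          then cis (2 * pi * real k * real (zp_trunc p (Suc N) w) / real (p ^ Suc N))
          else 0))"

text \<open>Fourier transform of a function on Z_p (extended by zero) at xi = p^{-n}:
  chi_p(p^{-n} x) = exp(2 pi i (x mod p^n)/p^n).\<close>
definition FT_Zp :: "nat \<Rightarrow> ((nat \<Rightarrow> nat) \<Rightarrow> complex) \<Rightarrow> nat \<Rightarrow> complex" where
  "FT_Zp p \<phi> n = (\<integral>x. cis (2 * pi * real (zp_trunc p n x) / real (p ^ n)) * \<phi> x \<partial>Haar p)"

text \<open>Radial Fourier transform of J(|x|_p): value at |xi|_p = p^n (taking xi = p^{-n}).\<close>
definition Jhat :: "nat \<Rightarrow> (real \<Rightarrow> real) \<Rightarrow> nat \<Rightarrow> complex" where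
  "Jhat p J n = FT_Zp p (\<lambda>x. complex_of_real (J (padic_abs p x))) n"

definition Jop :: "nat \<Rightarrow> (real \<Rightarrow> real) \<Rightarrow> ((nat \<Rightarrow> nat) \<Rightarrow> complex) \<Rightarrow> (nat \<Rightarrow> nat) \<Rightarrow> complex" where
  "Jop p J \<phi> x = (\<integral>y. complex_of_real (J (padic_abs p (zp_sub p x y))) * \<phi> y \<partial>Haar p) - \<phi> x"

end

theory Submission
  imports Defs
begin

text \<open>By translation invariance of Haar measure, the convolution J(|x|_p) * \<Psi>(x) equals
  \<integral> J(|z|_p) \<Psi>(x - z) dz. For r \<le> 0 the wavelet \<Psi>_{rbk}(x - z) depends on z only through
  z mod p^(1-r), and on every nonzero residue class c mod p^(1-r) the kernel J(|z|_p) is the constant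
  J(p^(-v_p(c))). The integral thus becomes the part over p^(1-r) Z_p plus a finite sum over residues.
  Splitting off the top digit of c, orthogonality of the p-th roots of unity kills every residue that
  is not a multiple of p^(-r); what survives is \<Psi>(x) times the same expression that computes
  Jhat(p^(1-r)). Part (ii) is translation invariance together with \<integral> J = 1.\<close>

section \<open>Digit arithmetic on Z_p\<close>

lemma zp_trunc_0 [simp]: "zp_trunc p 0 x = 0"
  by (simp add: zp_trunc_def)

lemma zp_trunc_Suc: "zp_trunc p (Suc n) x = zp_trunc p n x + x n * p ^ n"
  by (simp add: zp_trunc_def)

lemma zp_trunc_cong: "(\<And>i. i < n \<Longrightarrow> x i = y i) \<Longrightarrow> zp_trunc p n x = zp_trunc p n y"
  by (simp add: zp_trunc_def)

lemma zp_trunc_less: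
  assumes "\<forall>i. x i < p"
  shows "zp_trunc p n x < p ^ n"
proof (induction n)
  case (Suc n)
  then have "zp_trunc p (Suc n) x < (x n + 1) * p ^ n"
    by (simp add: zp_trunc_Suc)
  also have "\<dots> \<le> p * p ^ n"
    using assms by (intro mult_right_mono) (auto simp: Suc_le_eq)
  finally show ?case by simp
qed simp

lemma zp_trunc_eq_0_iff:
  assumes "p > 0"
  shows "zp_trunc p n x = 0 \<longleftrightarrow> (\<forall>i<n. x i = 0)"
  using assms by (auto simp: zp_trunc_def)

lemma zp_trunc_zp_of_nat:
  assumes "p > 0"
  shows "zp_trunc p n (zp_of_nat p a) = a mod p ^ n"
proof (induction n)
  case (Suc n)
  have "a mod (p ^ n * p) = p ^ n * (a div p ^ n mod p) + a mod p ^ n"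
    by (rule mod_mult2_eq)
  then show ?case
    using Suc by (simp add: zp_trunc_Suc zp_of_nat_def mult.commute)
qed simp

lemma zp_trunc_mod:
  assumes "n \<le> m" and digits: "\<forall>i. x i < p"
  shows "zp_trunc p m x mod p ^ n = zp_trunc p n x"
  using assms(1)
proof (induction m rule: dec_induct)
  case base
  then show ?case using zp_trunc_less[OF digits] by simp
next
  case (step m)
  have "p ^ n dvd x m * p ^ m"
    using step(1) by (simp add: le_imp_power_dvd)
  then show ?case
    using step(3) by (simp add: zp_trunc_Suc mod_add_right_eq[symmetric])
qed

lemma zp_of_nat_zp_trunc:
  assumes digits: "\<forall>i. x i < p" and "i < n"
  shows "zp_of_nat p (zp_trunc p n x) i = x i"
proof -
  have "p > 0" using digits by (cases p) auto
  have "zp_trunc p n x div p ^ i mod p = zp_trunc p n x mod (p ^ i * p) div p ^ i"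
    using \<open>p > 0\<close> by (simp add: mod_mult2_eq)
  also have "zp_trunc p n x mod (p ^ i * p) = zp_trunc p (Suc i) x"
    using zp_trunc_mod[OF _ digits, of "Suc i" n] \<open>i < n\<close> by (simp add: mult.commute)
  also have "\<dots> div p ^ i = x i"
    using zp_trunc_less[OF digits, of i] \<open>p > 0\<close> by (simp add: zp_trunc_Suc)
  finally show ?thesis by (simp add: zp_of_nat_def)
qed

lemma zp_trunc_eq_iff:
  assumes digits: "\<forall>i. x i < p" and "c < p ^ n"
  shows "zp_trunc p n x = c \<longleftrightarrow> (\<forall>i<n. x i = zp_of_nat p c i)"
proof
  assume "zp_trunc p n x = c"
  then show "\<forall>i<n. x i = zp_of_nat p c i"
    using zp_of_nat_zp_trunc[OF digits] by auto
next
  have "p > 0" using digits by (cases p) auto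
  assume "\<forall>i<n. x i = zp_of_nat p c i"
  then have "zp_trunc p n x = zp_trunc p n (zp_of_nat p c)"
    by (intro zp_trunc_cong) simp
  then show "zp_trunc p n x = c"
    using zp_trunc_zp_of_nat[OF \<open>p > 0\<close>] \<open>c < p ^ n\<close> by simp
qed

lemma zp_trunc_zp_sub:
  assumes "p > 0"
  shows "int (zp_trunc p n (zp_sub p x y)) = (int (zp_trunc p n x) - int (zp_trunc p n y)) mod int p ^ n"
proof (induction n)
  case (Suc n)
  define D where "D m = int (zp_trunc p m x) - int (zp_trunc p m y)" for m
  define e where "e = D (Suc n) mod int p ^ Suc n"
  have "e \<ge> 0" using assms by (simp add: e_def)
  have "D (Suc n) = D n + (int (x n) - int (y n)) * int p ^ n"
    by (simp add: D_def zp_trunc_Suc algebra_simps)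
  then have "D n mod int p ^ n = e mod int p ^ n"
    by (simp add: e_def mod_mod_cancel le_imp_power_dvd)
  moreover have "int (zp_sub p x y n) = e div int p ^ n"
    using \<open>e \<ge> 0\<close> by (simp add: zp_sub_def e_def D_def zdiv_int)
  ultimately have "int (zp_trunc p (Suc n) (zp_sub p x y)) = e mod int p ^ n + e div int p ^ n * int p ^ n"
    using Suc by (simp add: zp_trunc_Suc D_def)
  then show ?case by (simp only: mod_div_mult_eq e_def D_def)
qed simp

lemma zp_sub_digit_less:
  assumes "p > 0"
  shows "zp_sub p x y i < p"
proof -
  define e where "e = nat ((int (zp_trunc p (Suc i) x) - int (zp_trunc p (Suc i) y)) mod int (p ^ Suc i))"
  have "e < p * p ^ i"
    using assms by (simp add: e_def nat_less_iff)
  then have "e div p ^ i < p"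
    by (rule less_mult_imp_div_less)
  then show ?thesis
    unfolding zp_sub_def e_def .
qed

lemma zp_eqI_trunc:
  assumes "p > 0" "\<And>n. zp_trunc p n x = zp_trunc p n y"
  shows "x = y"
proof
  fix i
  have "x i * p ^ i = y i * p ^ i"
    using assms(2)[of "Suc i"] assms(2)[of i] by (simp add: zp_trunc_Suc)
  then show "x i = y i" using assms(1) by simp
qed

lemma zp_sub_zp_sub:
  assumes "p > 0" "\<forall>i. y i < p"
  shows "zp_sub p x (zp_sub p x y) = y"
proof (rule zp_eqI_trunc[OF assms(1)])
  fix n
  have "int (zp_trunc p n (zp_sub p x (zp_sub p x y))) = int (zp_trunc p n y) mod int p ^ n"
    using assms(1) by (simp add: zp_trunc_zp_sub mod_diff_right_eq)
  also have "\<dots> = int (zp_trunc p n y)"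
    using zp_trunc_less[OF assms(2), of n] by (simp add: of_nat_power[symmetric] del: of_nat_power)
  finally show "zp_trunc p n (zp_sub p x (zp_sub p x y)) = zp_trunc p n y" by simp
qed

section \<open>Haar measure and its translation invariance\<close>

lemma space_Haar: "space (Haar p) = {x. \<forall>i. x i < p}"
  unfolding Haar_def space_PiM space_uniform_count_measure PiE_def extensional_def Pi_def by simp

lemma prob_space_Haar: "p > 0 \<Longrightarrow> prob_space (Haar p)"
  unfolding Haar_def by (rule prob_space_PiM) (rule prob_space_uniform_count_measure, auto)

lemma measurable_zp_digit: "(\<lambda>x. x i) \<in> Haar p \<rightarrow>\<^sub>M count_space UNIV"
proof -
  have "(\<lambda>x. x i) \<in> Haar p \<rightarrow>\<^sub>M uniform_count_measure {..<p}"
    unfolding Haar_def by (rule measurable_component_singleton) simp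
  then have "(\<lambda>x. x i) \<in> Haar p \<rightarrow>\<^sub>M count_space {..<p}"
    by (simp add: measurable_cong_sets[OF refl sets_uniform_count_measure_count_space])
  then show ?thesis
    by (rule measurable_compose) simp
qed

lemma measurable_zp_trunc: "zp_trunc p n \<in> Haar p \<rightarrow>\<^sub>M count_space UNIV"
proof (induction n)
  case 0
  then show ?case by (simp add: zp_trunc_def)
next
  case (Suc n)
  have "(\<lambda>x. (zp_trunc p n x, x n)) \<in> Haar p \<rightarrow>\<^sub>M count_space UNIV \<Otimes>\<^sub>M count_space UNIV"
    using Suc measurable_zp_digit by (rule measurable_Pair)
  then have "(\<lambda>x. (zp_trunc p n x, x n)) \<in> Haar p \<rightarrow>\<^sub>M count_space UNIV"
    by (simp add: pair_measure_countable)
  then have "(\<lambda>x. case (zp_trunc p n x, x n) of (a, b) \<Rightarrow> a + b * p ^ n) \<in> Haar p \<rightarrow>\<^sub>M count_space UNIV"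
    by (rule measurable_compose) simp
  then show ?case
    by (simp add: zp_trunc_Suc[abs_def])
qed

lemma sets_Haar_zp_trunc: "{x \<in> space (Haar p). P (zp_trunc p n x)} \<in> sets (Haar p)"
proof -
  have "{x \<in> space (Haar p). P (zp_trunc p n x)} = zp_trunc p n -` {c. P c} \<inter> space (Haar p)"
    by auto
  then show ?thesis
    using measurable_sets[OF measurable_zp_trunc, of "{c. P c}" p n] by simp
qed

lemma emeasure_Haar_zp_trunc_eq:
  assumes "p > 0" "c < p ^ n"
  shows "emeasure (Haar p) {x \<in> space (Haar p). zp_trunc p n x = c} = ennreal ((1 / real p) ^ n)"
proof -
  have "{x \<in> space (Haar p). zp_trunc p n x = c} = {x \<in> space (Haar p). \<forall>i<n. x i = zp_of_nat p c i}"
    using zp_trunc_eq_iff[OF _ assms(2)] by (auto simp: space_Haar)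
  also have "\<dots> =
      prod_emb UNIV (\<lambda>_. uniform_count_measure {..<p}) {..<n} (\<Pi>\<^sub>E i\<in>{..<n}. {zp_of_nat p c i})"
    unfolding Haar_def by (auto simp: prod_emb_def space_PiM PiE_def extensional_def Pi_def)
  also have "emeasure (Haar p) \<dots> = (\<Prod>i<n. emeasure (uniform_count_measure {..<p}) {zp_of_nat p c i})"
    unfolding Haar_def using assms(1)
    by (intro emeasure_PiM_emb)
      (auto intro: prob_space_uniform_count_measure simp: sets_uniform_count_measure zp_of_nat_def)
  also have "\<dots> = (\<Prod>i<n. ennreal (1 / real p))"
    using assms(1)
    by (intro prod.cong refl)
      (simp add: emeasure_uniform_count_measure zp_of_nat_def ennreal_of_nat_eq_real_of_nat divide_ennreal)
  finally show ?thesis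
    by (simp add: ennreal_power)
qed

lemma emeasure_Haar_zp_trunc_in:
  assumes "p > 0" "S \<subseteq> {..<p ^ n}"
  shows "emeasure (Haar p) {x \<in> space (Haar p). zp_trunc p n x \<in> S} = ennreal (real (card S) * (1 / real p) ^ n)"
proof -
  have "finite S"
    using assms(2) finite_subset by blast
  have "{x \<in> space (Haar p). zp_trunc p n x \<in> S} = (\<Union>c\<in>S. {x \<in> space (Haar p). zp_trunc p n x = c})"
    by auto
  also have "emeasure (Haar p) \<dots> = (\<Sum>c\<in>S. emeasure (Haar p) {x \<in> space (Haar p). zp_trunc p n x = c})"
    using \<open>finite S\<close> sets_Haar_zp_trunc
    by (intro sum_emeasure[symmetric]) (auto simp: disjoint_family_on_def)
  also have "\<dots> = (\<Sum>c\<in>S. ennreal ((1 / real p) ^ n))"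
    using assms by (intro sum.cong refl emeasure_Haar_zp_trunc_eq) auto
  finally show ?thesis
    by (simp add: ennreal_of_nat_eq_real_of_nat ennreal_mult)
qed

lemma measurable_zp_sub:
  assumes "p > 0"
  shows "zp_sub p x \<in> Haar p \<rightarrow>\<^sub>M Haar p"
proof -
  have "(\<lambda>y. zp_sub p x y i) \<in> Haar p \<rightarrow>\<^sub>M count_space {..<p}" for i
    unfolding measurable_count_space_eq2_countable
  proof (intro conjI ballI)
    show "(\<lambda>y. zp_sub p x y i) \<in> space (Haar p) \<rightarrow> {..<p}"
      using zp_sub_digit_less[OF assms] by auto
    fix a
    have "(\<lambda>y. zp_sub p x y i) -` {a} \<inter> space (Haar p) = {y \<in> space (Haar p).
        nat ((int (zp_trunc p (Suc i) x) - int (zp_trunc p (Suc i) y)) mod int (p ^ Suc i)) div p ^ i = a}"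
      by (auto simp: zp_sub_def)
    then show "(\<lambda>y. zp_sub p x y i) -` {a} \<inter> space (Haar p) \<in> sets (Haar p)"
      using sets_Haar_zp_trunc by simp
  qed
  then have "(\<lambda>y. zp_sub p x y) \<in> Haar p \<rightarrow>\<^sub>M (\<Pi>\<^sub>M i\<in>(UNIV::nat set). uniform_count_measure {..<p})"
    using zp_sub_digit_less[OF assms]
    by (intro measurable_PiM_single')
      (auto simp: measurable_cong_sets[OF refl sets_uniform_count_measure_count_space]
        space_uniform_count_measure)
  then show ?thesis
    unfolding Haar_def .
qed

lemma prod_emb_Haar_eq_zp_trunc:
  assumes "I \<subseteq> {..<n}" "\<forall>i\<in>I. A i \<subseteq> {..<p}"
  shows "prod_emb UNIV (\<lambda>_. uniform_count_measure {..<p}) I (Pi\<^sub>E I A) =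
    {y \<in> space (Haar p). zp_trunc p n y \<in> {c \<in> {..<p ^ n}. \<forall>i\<in>I. zp_of_nat p c i \<in> A i}}"
proof -
  have "prod_emb UNIV (\<lambda>_. uniform_count_measure {..<p}) I (Pi\<^sub>E I A) = {y \<in> space (Haar p). \<forall>i\<in>I. y i \<in> A i}"
    unfolding Haar_def by (auto simp: prod_emb_def space_PiM PiE_def extensional_def Pi_def)
  also have "\<dots> = {y \<in> space (Haar p). zp_trunc p n y \<in> {c \<in> {..<p ^ n}. \<forall>i\<in>I. zp_of_nat p c i \<in> A i}}"
  proof (intro Collect_cong conj_cong refl)
    fix y
    assume "y \<in> space (Haar p)"
    then have digits: "\<forall>i. y i < p"
      by (simp add: space_Haar)
    have "zp_of_nat p (zp_trunc p n y) i = y i" if "i \<in> I" for i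
      using zp_of_nat_zp_trunc[OF digits] that assms(1) by auto
    then show "(\<forall>i\<in>I. y i \<in> A i) \<longleftrightarrow> zp_trunc p n y \<in> {c \<in> {..<p ^ n}. \<forall>i\<in>I. zp_of_nat p c i \<in> A i}"
      using zp_trunc_less[OF digits, of n] by auto
  qed
  finally show ?thesis .
qed

lemma emeasure_Haar_zp_sub_vimage:
  assumes "p > 0" "S \<subseteq> {..<p ^ n}"
  shows "emeasure (Haar p) (zp_sub p x -` {y \<in> space (Haar p). zp_trunc p n y \<in> S} \<inter> space (Haar p)) =
    emeasure (Haar p) {y \<in> space (Haar p). zp_trunc p n y \<in> S}"
proof -
  txt \<open>y \<mapsto> x - y acts on the residues mod p^n by the involution g.\<close>
  define g where "g c = nat ((int (zp_trunc p n x) - int c) mod int (p ^ n))" for c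
  define S' where "S' = {c \<in> {..<p ^ n}. g c \<in> S}"
  have "zp_sub p x -` {y \<in> space (Haar p). zp_trunc p n y \<in> S} \<inter> space (Haar p) =
      {y \<in> space (Haar p). zp_trunc p n y \<in> S'}"
    using zp_sub_digit_less[OF assms(1)] zp_trunc_less
    by (auto simp: S'_def g_def space_Haar zp_trunc_zp_sub[OF assms(1), symmetric])
  also have "emeasure (Haar p) \<dots> = ennreal (real (card S') * (1 / real p) ^ n)"
    using assms(1) by (intro emeasure_Haar_zp_trunc_in) (auto simp: S'_def)
  also have "card S' = card S"
  proof (rule bij_betw_same_card)
    have "g (g c) = c" if "c < p ^ n" for c
      using that assms(1) by (simp add: g_def mod_diff_right_eq)
    moreover have "g c < p ^ n" for c
      using assms(1) by (simp add: g_def nat_less_iff)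
    ultimately show "bij_betw g S' S"
      using assms(2) by (intro bij_betw_byWitness[where f' = g]) (auto simp: S'_def)
  qed
  also have "ennreal (real (card S) * (1 / real p) ^ n) = emeasure (Haar p) {y \<in> space (Haar p). zp_trunc p n y \<in> S}"
    using assms by (intro emeasure_Haar_zp_trunc_in[symmetric])
  finally show ?thesis .
qed

lemma distr_Haar_zp_sub:
  assumes "p > 0"
  shows "distr (Haar p) (Haar p) (zp_sub p x) = Haar p"
proof (rule measure_eqI_PiM_infinite[of _ UNIV "\<lambda>_. uniform_count_measure {..<p}"])
  let ?U = "\<lambda>_::nat. uniform_count_measure {..<p}"
  interpret prob_space "Haar p"
    using prob_space_Haar[OF assms] .
  show "sets (distr (Haar p) (Haar p) (zp_sub p x)) = sets (Pi\<^sub>M UNIV ?U)"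
    "sets (Haar p) = sets (Pi\<^sub>M UNIV ?U)"
    by (simp_all add: Haar_def)
  show "finite_measure (distr (Haar p) (Haar p) (zp_sub p x))"
    using prob_space_distr[OF measurable_zp_sub[OF assms]] by (simp add: prob_space_def)
  fix A I
  assume I: "finite I" and A: "\<And>i. i \<in> I \<Longrightarrow> A i \<in> sets (?U i)"
  obtain n where n: "I \<subseteq> {..<n}"
    using I finite_nat_bounded by blast
  define S where "S = {c \<in> {..<p ^ n}. \<forall>i\<in>I. zp_of_nat p c i \<in> A i}"
  have cylinder: "prod_emb UNIV ?U I (Pi\<^sub>E I A) = {y \<in> space (Haar p). zp_trunc p n y \<in> S}"
    unfolding S_def using n A by (intro prod_emb_Haar_eq_zp_trunc) (auto simp: sets_uniform_count_measure)
  have "S \<subseteq> {..<p ^ n}"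
    by (auto simp: S_def)
  then show "emeasure (distr (Haar p) (Haar p) (zp_sub p x)) (prod_emb UNIV ?U I (Pi\<^sub>E I A))
      = emeasure (Haar p) (prod_emb UNIV ?U I (Pi\<^sub>E I A))"
    unfolding cylinder
    by (subst emeasure_distr[OF measurable_zp_sub[OF assms] sets_Haar_zp_trunc])
      (rule emeasure_Haar_zp_sub_vimage[OF assms])
qed

lemma integral_Haar_zp_sub:
  fixes f :: "(nat \<Rightarrow> nat) \<Rightarrow> 'b::{banach, second_countable_topology}"
  assumes "p > 0" "f \<in> borel_measurable (Haar p)"
  shows "(\<integral>y. f (zp_sub p x y) \<partial>Haar p) = (\<integral>z. f z \<partial>Haar p)"
proof -
  have "(\<integral>z. f z \<partial>distr (Haar p) (Haar p) (zp_sub p x)) = (\<integral>y. f (zp_sub p x y) \<partial>Haar p)"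
    by (rule integral_distr[OF measurable_zp_sub[OF assms(1)] assms(2)])
  then show ?thesis
    by (simp add: distr_Haar_zp_sub[OF assms(1)])
qed

section \<open>Valuations and sums of roots of unity\<close>

lemma pow_dvd_zp_trunc_iff:
  assumes digits: "\<forall>i. x i < p" and "i \<le> n"
  shows "p ^ i dvd zp_trunc p n x \<longleftrightarrow> (\<forall>j<i. x j = 0)"
proof -
  have "p > 0"
    using digits by (cases p) auto
  have "p ^ i dvd zp_trunc p n x \<longleftrightarrow> zp_trunc p i x = 0"
    using zp_trunc_mod[OF assms(2) digits] by (simp add: dvd_eq_mod_eq_0)
  then show ?thesis
    using zp_trunc_eq_0_iff[OF \<open>p > 0\<close>] by simp
qed

lemma padic_abs_eq_multiplicity_zp_trunc:
  assumes "z \<in> space (Haar p)" "zp_trunc p M z \<noteq> 0"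
  shows "padic_abs p z = real p powr - real (multiplicity p (zp_trunc p M z))"
proof -
  have digits: "\<forall>i. z i < p"
    using assms(1) by (simp add: space_Haar)
  then have "p > 0"
    by (cases p) auto
  obtain j where "j < M" "z j \<noteq> 0"
    using assms(2) zp_trunc_eq_0_iff[OF \<open>p > 0\<close>] by auto
  define L where "L = (LEAST i. z i \<noteq> 0)"
  have "z L \<noteq> 0" "L \<le> j" "\<forall>i<L. z i = 0"
    using \<open>z j \<noteq> 0\<close> not_less_Least unfolding L_def by (auto intro: LeastI Least_le)
  have "multiplicity p (zp_trunc p M z) = L"
  proof (rule multiplicity_eqI)
    show "p ^ L dvd zp_trunc p M z"
      using pow_dvd_zp_trunc_iff[OF digits, of L M] \<open>L \<le> j\<close> \<open>j < M\<close> \<open>\<forall>i<L. z i = 0\<close> by simp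
    show "\<not> p ^ Suc L dvd zp_trunc p M z"
      using pow_dvd_zp_trunc_iff[OF digits, of "Suc L" M] \<open>L \<le> j\<close> \<open>j < M\<close> \<open>z L \<noteq> 0\<close> by auto
  qed
  moreover have "\<not> (\<forall>i. z i = 0)"
    using \<open>z j \<noteq> 0\<close> by auto
  ultimately show ?thesis
    unfolding padic_abs_def L_def[symmetric] by (simp only: if_False)
qed

lemma multiplicity_add_pow_mult:
  fixes p c :: nat
  assumes "p > 1" "0 < c" "c < p ^ N"
  shows "multiplicity p (c + p ^ N * d) = multiplicity p c"
proof (rule multiplicity_eqI)
  let ?m = "multiplicity p c"
  have "\<not> p ^ N dvd c"
    using assms(2,3) by (auto dest: dvd_imp_le)
  then have "?m < N"
    using assms by (intro multiplicity_lessI) auto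
  then have "p ^ Suc ?m dvd p ^ N * d"
    by (intro dvd_mult2 le_imp_power_dvd) simp
  moreover have "p ^ ?m dvd p ^ N * d"
    using \<open>?m < N\<close> by (intro dvd_mult2 le_imp_power_dvd) simp
  ultimately show "p ^ ?m dvd c + p ^ N * d" "\<not> p ^ Suc ?m dvd c + p ^ N * d"
    using multiplicity_dvd[of p c] multiplicity_geI[of c p "Suc ?m"] assms(1,2)
    by (auto simp: dvd_add_left_iff)
qed

lemma multiplicity_pow_mult_digit:
  fixes p d :: nat
  assumes "0 < d" "d < p"
  shows "multiplicity p (p ^ N * d) = N"
proof (rule multiplicity_eqI)
  show "p ^ N dvd p ^ N * d"
    by simp
  show "\<not> p ^ Suc N dvd p ^ N * d"
    using assms by (auto dest: dvd_imp_le)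
qed

lemma sum_cis_multiple_eq_0:
  assumes "p > 0" "\<not> int p dvd j"
  shows "(\<Sum>d<p. cis (2 * pi * of_int j * real d / real p)) = 0"
proof -
  define z where "z = cis (2 * pi * of_int j / real p)"
  have z_pow: "z ^ d = cis (2 * pi * of_int j * real d / real p)" for d
  proof -
    have "z ^ d = cis (real d * (2 * pi * of_int j / real p))"
      unfolding z_def by (rule Complex.DeMoivre)
    then show ?thesis
      by (simp add: mult_ac)
  qed
  have "z ^ p = 1"
    using assms(1) by (simp add: z_pow cis_multiple_2pi)
  moreover have "z \<noteq> 1"
  proof
    assume "z = 1"
    then obtain n :: int where "2 * pi * of_int j / real p = 2 * pi * of_int n"
      by (auto simp: z_def complex_eq_iff cos_one_2pi_int)
    then have "of_int j = (of_int (n * int p) :: real)"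
      using assms(1) by (simp add: field_simps)
    then show False
      using assms(2) by (simp only: of_int_eq_iff) simp
  qed
  ultimately have "(\<Sum>d<p. z ^ d) = 0"
    by (simp add: sum_gp_strict)
  then show ?thesis
    by (simp add: z_pow)
qed

lemma sum_cis_multiple_nonzero_eq_minus_1:
  assumes "p > 0" "\<not> int p dvd j"
  shows "(\<Sum>d<p. if d = 0 then 0 else cis (2 * pi * of_int j * real d / real p)) = -1"
proof -
  have "(\<Sum>d<p. cis (2 * pi * of_int j * real d / real p)) =
      (\<Sum>d<p. if d = 0 then 0 else cis (2 * pi * of_int j * real d / real p)) + (\<Sum>d<p. if d = 0 then 1 else 0)"
    by (subst sum.distrib[symmetric]) (intro sum.cong refl, simp)
  then show ?thesis
    using sum_cis_multiple_eq_0[OF assms] assms(1) by (simp add: add_eq_0_iff2)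
qed

lemma sum_lessThan_mult_split:
  fixes f :: "nat \<Rightarrow> 'a::comm_monoid_add"
  shows "(\<Sum>c<q * m. f c) = (\<Sum>c<q. \<Sum>d<m. f (c + q * d))"
proof (induction m)
  case (Suc m)
  have "(\<Sum>c<q * Suc m. f c) = (\<Sum>c<q * m. f c) + (\<Sum>c\<in>{q * m..<q * m + q}. f c)"
    by (simp add: sum.atLeastLessThan_concat[symmetric] lessThan_atLeast0 add.commute)
  also have "(\<Sum>c\<in>{q * m..<q * m + q}. f c) = (\<Sum>c<q. f (c + q * m))"
    by (simp add: sum.shift_bounds_nat_ivl[of f 0 "q * m" q, simplified] lessThan_atLeast0 add.commute)
  finally show ?case
    using Suc by (simp add: sum.distrib)
qed simp

text \<open>A radial kernel w(v_p(z)) is constant on every nonzero residue class c mod p^M, with value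
  radial_weight p w c.\<close>

definition radial_weight :: "nat \<Rightarrow> (nat \<Rightarrow> 'a::zero) \<Rightarrow> nat \<Rightarrow> 'a" where
  "radial_weight p w c = (if c = 0 then 0 else w (multiplicity p c))"

lemma sum_radial_weight_twisted:
  fixes F :: "nat \<Rightarrow> complex"
  assumes "p > 1" "\<not> int p dvd j"
    and twist: "\<And>c d. c < p ^ N \<Longrightarrow> F (c + p ^ N * d) = F c * cis (2 * pi * of_int j * real d / real p)"
  shows "(\<Sum>c<p ^ Suc N. F c * radial_weight p w c) = - F 0 * w N"
proof -
  let ?e = "\<lambda>d. cis (2 * pi * of_int j * real d / real p)"
  txt \<open>In the inner sum over the top digit d the weight is constant unless c = 0, while F picks up
    a nontrivial p-th root of unity.\<close>
  have inner: "(\<Sum>d<p. F (c + p ^ N * d) * radial_weight p w (c + p ^ N * d)) = (if c = 0 then - F 0 * w N else 0)"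
    if "c < p ^ N" for c
  proof (cases "c = 0")
    case True
    have "(\<Sum>d<p. F (c + p ^ N * d) * radial_weight p w (c + p ^ N * d)) =
        F 0 * w N * (\<Sum>d<p. if d = 0 then 0 else ?e d)"
      unfolding sum_distrib_left
      using True twist[of 0] assms(1) multiplicity_pow_mult_digit[of _ p N]
      by (intro sum.cong refl) (auto simp: radial_weight_def)
    then show ?thesis
      using True sum_cis_multiple_nonzero_eq_minus_1[OF _ assms(2)] assms(1) by simp
  next
    case False
    have "(\<Sum>d<p. F (c + p ^ N * d) * radial_weight p w (c + p ^ N * d)) =
        F c * radial_weight p w c * (\<Sum>d<p. ?e d)"
      unfolding sum_distrib_left
      using False that twist multiplicity_add_pow_mult[OF assms(1)]
      by (intro sum.cong refl) (auto simp: radial_weight_def)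
    then show ?thesis
      using False sum_cis_multiple_eq_0[OF _ assms(2)] assms(1) by simp
  qed
  have "(\<Sum>c<p ^ Suc N. F c * radial_weight p w c) =
      (\<Sum>c<p ^ N. \<Sum>d<p. F (c + p ^ N * d) * radial_weight p w (c + p ^ N * d))"
    by (simp only: power_Suc2 sum_lessThan_mult_split)
  also have "\<dots> = (\<Sum>c<p ^ N. if c = 0 then - F 0 * w N else 0)"
    by (intro sum.cong refl inner) simp
  also have "\<dots> = - F 0 * w N"
    using assms(1) by simp
  finally show ?thesis .
qed

lemma sum_radial_weight_cis:
  fixes w :: "nat \<Rightarrow> complex"
  assumes "p > 1"
  shows "(\<Sum>c<p ^ Suc N. cis (2 * pi * real c / real (p ^ Suc N)) * radial_weight p w c) = - w N"
proof -
  have "(\<Sum>c<p ^ Suc N. cis (2 * pi * real c / real (p ^ Suc N)) * radial_weight p w c) =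
      - cis (2 * pi * real 0 / real (p ^ Suc N)) * w N"
  proof (rule sum_radial_weight_twisted[OF assms, where j = 1 and F = "\<lambda>c. cis (2 * pi * real c / real (p ^ Suc N))"])
    show "\<not> int p dvd 1"
      using assms by simp
    show "cis (2 * pi * real (c + p ^ N * d) / real (p ^ Suc N)) =
        cis (2 * pi * real c / real (p ^ Suc N)) * cis (2 * pi * of_int 1 * real d / real p)" for c d
    proof -
      have "2 * pi * real (c + p ^ N * d) / real (p ^ Suc N) =
          2 * pi * real c / real (p ^ Suc N) + 2 * pi * of_int 1 * real d / real p"
        using assms by (simp add: field_simps)
      then show ?thesis
        unfolding cis_mult by simp
    qed
  qed
  then show ?thesis
    by simp
qed

section \<open>The wavelets\<close>

text \<open>\<chi>_p(k v / p^(N+1)) \<Omega>(|p^(-N) v|_p) for an integer v. With r = -N and a = b p^N one has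
  \<Psi>_{rbk}(y) = p^(N/2) \<cdot> wavelet_res p N k (y - a), see Psi_eq_wavelet_res.\<close>

definition wavelet_res :: "nat \<Rightarrow> nat \<Rightarrow> nat \<Rightarrow> int \<Rightarrow> complex" where
  "wavelet_res p N k v =
     (if int p ^ N dvd v then cis (2 * pi * real k * of_int v / real p ^ Suc N) else 0)"

lemma wavelet_res_mod:
  assumes "p > 0"
  shows "wavelet_res p N k (v mod int p ^ Suc N) = wavelet_res p N k v"
proof -
  let ?P = "int p ^ Suc N"
  have "int p ^ N dvd ?P"
    by (simp add: le_imp_power_dvd)
  then have "int p ^ N dvd v mod ?P \<longleftrightarrow> int p ^ N dvd v"
    by (rule dvd_mod_iff)
  moreover have "2 * pi * real k * of_int v / real p ^ Suc N =
      2 * pi * real k * of_int (v mod ?P) / real p ^ Suc N + 2 * pi * of_int (int k * (v div ?P))"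
  proof -
    have "real_of_int v = of_int (v mod ?P + ?P * (v div ?P))"
      by simp
    also have "\<dots> = of_int (v mod ?P) + real p ^ Suc N * of_int (v div ?P)"
      by (simp only: of_int_add of_int_mult of_int_power of_int_of_nat_eq)
    finally show ?thesis
      using assms by (simp add: field_simps)
  qed
  ultimately show ?thesis
    by (simp add: wavelet_res_def cis_mult[symmetric] cis_multiple_2pi)
qed

lemma wavelet_res_shift:
  assumes "p > 0"
  shows "wavelet_res p N k (v - int p ^ N * int d) =
    wavelet_res p N k v * cis (2 * pi * of_int (- int k) * real d / real p)"
proof -
  have "int p ^ N dvd v - int p ^ N * int d \<longleftrightarrow> int p ^ N dvd v"
    by (simp add: dvd_diff_left_iff)
  moreover have "2 * pi * real k * of_int (v - int p ^ N * int d) / real p ^ Suc N =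
      2 * pi * real k * of_int v / real p ^ Suc N + 2 * pi * of_int (- int k) * real d / real p"
    using assms by (simp add: field_simps)
  ultimately show ?thesis
    by (simp add: wavelet_res_def cis_mult)
qed

lemma sum_radial_weight_wavelet_res:
  fixes w :: "nat \<Rightarrow> complex"
  assumes "p > 1" "\<not> int p dvd int k"
  shows "(\<Sum>c<p ^ Suc N. wavelet_res p N k (u - int c) * radial_weight p w c) = - wavelet_res p N k u * w N"
proof -
  have "(\<Sum>c<p ^ Suc N. wavelet_res p N k (u - int c) * radial_weight p w c) =
      - wavelet_res p N k (u - int 0) * w N"
  proof (rule sum_radial_weight_twisted[OF assms(1), where j = "- int k" and F = "\<lambda>c. wavelet_res p N k (u - int c)"])
    show "\<not> int p dvd - int k"
      using assms(2) by simp
    show "wavelet_res p N k (u - int (c + p ^ N * d)) =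
        wavelet_res p N k (u - int c) * cis (2 * pi * of_int (- int k) * real d / real p)" for c d
      using wavelet_res_shift[of p N k "u - int c" d] assms(1) by (simp add: algebra_simps)
  qed
  then show ?thesis
    by simp
qed

lemma rat_in_Zp_Ints_of_mult_pow:
  assumes "rat_in_Zp p q" "q * of_nat (p ^ n) = of_int m"
  shows "q \<in> \<int>"
proof -
  obtain u v where quot: "quotient_of q = (u, v)"
    by (cases "quotient_of q") auto
  have "v > 0" "coprime u v" "q = of_int u / of_int v"
    using quotient_of_denom_pos[OF quot] quotient_of_coprime[OF quot] quotient_of_div[OF quot] by auto
  have "coprime v (int (p ^ n))"
    using assms(1) quot by (simp add: rat_in_Zp_def)
  have "of_int u / of_int v * of_int (int (p ^ n)) = (of_int m :: rat)"
    using assms(2) \<open>q = of_int u / of_int v\<close> by simp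
  then have "of_int (u * int (p ^ n)) = (of_int (m * v) :: rat)"
    using \<open>v > 0\<close> by (simp add: field_simps)
  then have "u * int (p ^ n) = m * v"
    by (simp only: of_int_eq_iff)
  then have "v dvd int (p ^ n)"
    using \<open>coprime u v\<close> by (metis dvd_triv_right coprime_commute coprime_dvd_mult_right_iff)
  then have "v = 1"
    using \<open>v > 0\<close> \<open>coprime v (int (p ^ n))\<close> coprime_common_divisor[of v "int (p ^ n)" v] by simp
  then show ?thesis
    using \<open>q = of_int u / of_int v\<close> by simp
qed

lemma QpZp_mult_pow_eq_nat:
  assumes "p > 0" "b \<in> QpZp p" "rat_in_Zp p (b * of_nat (p ^ N))"
  obtains a where "a < p ^ N" "b * of_nat (p ^ N) = of_nat a"
proof -
  obtain a' n where a': "a' < p ^ n" "b = of_nat a' / of_nat (p ^ n)"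
    using assms(2) by (auto simp: QpZp_def)
  have "b * of_nat (p ^ N) * of_nat (p ^ n) = of_int (int (a' * p ^ N))"
    using assms(1) by (simp add: a'(2))
  then obtain u where u: "b * of_nat (p ^ N) = of_int u"
    using rat_in_Zp_Ints_of_mult_pow[OF assms(3)] by (blast elim: Ints_cases)
  have "0 \<le> b" "b < 1"
    using a' assms(1) by (simp_all add: divide_less_eq_1 flip: of_nat_power)
  then have "0 \<le> (of_int u :: rat)" "of_int u < (of_int (int p ^ N) :: rat)"
    using assms(1) by (simp_all flip: u)
  then have "0 \<le> u" "u < int p ^ N"
    by (simp_all only: of_int_0_le_iff of_int_less_iff)
  then have "nat u < p ^ N" "b * of_nat (p ^ N) = of_nat (nat u)"
    using u by (simp_all add: nat_less_iff)
  then show ?thesis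
    using that by blast
qed

lemma Psi_eq_wavelet_res:
  assumes "p > 0" "r \<le> 0" "b \<in> QpZp p" "rat_in_Zp p (b * of_nat (p ^ nat (- r)))"
  obtains a where "\<And>y. y \<in> space (Haar p) \<Longrightarrow> Psi p r b k y =
    complex_of_real (real p powr (- real_of_int r / 2)) *
    wavelet_res p (nat (- r)) k (int (zp_trunc p (Suc (nat (- r))) y) - int a)"
proof -
  define N where "N = nat (- r)"
  obtain a where "a < p ^ N" and a: "b * of_nat (p ^ N) = of_nat a"
    using QpZp_mult_pow_eq_nat[OF assms(1,3,4)] unfolding N_def by blast
  have "(LEAST N'. - r \<le> int N' \<and> b * of_nat (p ^ N') \<in> \<int>) = N"
    using a assms(2) by (intro Least_equality) (auto simp: N_def)
  moreover have "nat (r + int N) = 0"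
    using assms(2) by (simp add: N_def)
  ultimately have Psi_eq: "Psi p r b k y = complex_of_real (real p powr (- real_of_int r / 2)) *
      (if zp_trunc p N (zp_sub p y (zp_of_nat p a)) = 0
       then cis (2 * pi * real k * real (zp_trunc p (Suc N) (zp_sub p y (zp_of_nat p a))) / real (p ^ Suc N))
       else 0)" for y
    using a by (simp add: Psi_def Let_def zp_shift_def)
  show ?thesis
  proof (rule that)
    fix y
    define w where "w = zp_sub p y (zp_of_nat p a)"
    have digits: "\<forall>i. w i < p"
      using zp_sub_digit_less[OF assms(1)] by (simp add: w_def)
    have "zp_trunc p N w = 0 \<longleftrightarrow> int p ^ N dvd int (zp_trunc p (Suc N) w)"
      using zp_trunc_mod[OF _ digits, of N "Suc N"]
      by (simp add: dvd_eq_mod_eq_0 flip: of_nat_power of_nat_mod)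
    then have "Psi p r b k y = complex_of_real (real p powr (- real_of_int r / 2)) *
        wavelet_res p N k (int (zp_trunc p (Suc N) w))"
      by (simp add: Psi_eq wavelet_res_def w_def)
    also have "int (zp_trunc p (Suc N) w) = (int (zp_trunc p (Suc N) y) - int a) mod int p ^ Suc N"
    proof -
      have "p ^ N \<le> p ^ Suc N"
        using assms(1) by (intro power_increasing) auto
      with \<open>a < p ^ N\<close> have "a < p ^ Suc N"
        by (rule less_le_trans)
      then show ?thesis
        using assms(1) by (simp add: w_def zp_trunc_zp_sub zp_trunc_zp_of_nat)
    qed
    finally show "Psi p r b k y = complex_of_real (real p powr (- real_of_int r / 2)) *
        wavelet_res p (nat (- r)) k (int (zp_trunc p (Suc (nat (- r))) y) - int a)"
      using wavelet_res_mod[OF assms(1), of N k "int (zp_trunc p (Suc N) y) - int a"] by (simp add: N_def)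
  qed
qed

lemma Psi_measurable:
  assumes "p > 0" "r \<le> 0" "b \<in> QpZp p" "rat_in_Zp p (b * of_nat (p ^ nat (- r)))"
  shows "Psi p r b k \<in> borel_measurable (Haar p)"
proof -
  obtain a where Psi_eq: "\<And>y. y \<in> space (Haar p) \<Longrightarrow> Psi p r b k y =
      complex_of_real (real p powr (- real_of_int r / 2)) *
      wavelet_res p (nat (- r)) k (int (zp_trunc p (Suc (nat (- r))) y) - int a)"
    using Psi_eq_wavelet_res[OF assms] by blast
  have "(\<lambda>y. complex_of_real (real p powr (- real_of_int r / 2)) *
      wavelet_res p (nat (- r)) k (int (zp_trunc p (Suc (nat (- r))) y) - int a)) \<in> borel_measurable (Haar p)"
    by (rule measurable_compose[OF measurable_zp_trunc]) simp
  then show ?thesis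
    by (rule measurable_cong[THEN iffD1, rotated]) (simp add: Psi_eq)
qed

section \<open>Convolution with a radial kernel\<close>

lemma integral_mult_zp_trunc:
  fixes f :: "(nat \<Rightarrow> nat) \<Rightarrow> complex" and h :: "nat \<Rightarrow> complex"
  assumes "integrable (Haar p) f"
  shows "(\<integral>z. f z * h (zp_trunc p M z) \<partial>Haar p) =
    (\<Sum>c<p ^ M. h c * (LINT z:{z \<in> space (Haar p). zp_trunc p M z = c}|Haar p. f z))"
proof -
  let ?S = "\<lambda>c. {z \<in> space (Haar p). zp_trunc p M z = c}"
  have "(\<integral>z. f z * h (zp_trunc p M z) \<partial>Haar p) =
      (\<integral>z. (\<Sum>c<p ^ M. h c * (indicator (?S c) z *\<^sub>R f z)) \<partial>Haar p)"
  proof (rule Bochner_Integration.integral_cong[OF refl])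
    fix z
    assume z: "z \<in> space (Haar p)"
    then have "zp_trunc p M z < p ^ M"
      using zp_trunc_less by (simp add: space_Haar)
    moreover have "(\<Sum>c<p ^ M. h c * (indicator (?S c) z *\<^sub>R f z)) =
        (\<Sum>c<p ^ M. if zp_trunc p M z = c then h c * f z else 0)"
      using z by (intro sum.cong refl) (simp add: indicator_def)
    ultimately show "f z * h (zp_trunc p M z) = (\<Sum>c<p ^ M. h c * (indicator (?S c) z *\<^sub>R f z))"
      by (simp add: mult.commute)
  qed
  also have "\<dots> = (\<Sum>c<p ^ M. \<integral>z. h c * (indicator (?S c) z *\<^sub>R f z) \<partial>Haar p)"
    using assms sets_Haar_zp_trunc
    by (intro Bochner_Integration.integral_sum integrable_mult_right integrable_mult_indicator) auto
  also have "\<dots> = (\<Sum>c<p ^ M. h c * (\<integral>z. indicator (?S c) z *\<^sub>R f z \<partial>Haar p))"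
    by (simp only: integral_mult_right_zero)
  finally show ?thesis
    by (simp add: set_lebesgue_integral_def)
qed

lemma set_integral_radial_zp_trunc:
  fixes J :: "real \<Rightarrow> real"
  assumes "p > 0" "0 < c" "c < p ^ M"
  shows "(LINT z:{z \<in> space (Haar p). zp_trunc p M z = c}|Haar p. complex_of_real (J (padic_abs p z))) =
    complex_of_real ((1 / real p) ^ M * J (real p powr - real (multiplicity p c)))"
proof -
  let ?S = "{z \<in> space (Haar p). zp_trunc p M z = c}"
  have "(LINT z:?S|Haar p. complex_of_real (J (padic_abs p z))) =
      (LINT z:?S|Haar p. complex_of_real (J (real p powr - real (multiplicity p c))))"
    using assms(2) sets_Haar_zp_trunc
    by (intro set_lebesgue_integral_cong) (auto simp: padic_abs_eq_multiplicity_zp_trunc)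
  also have "\<dots> = measure (Haar p) ?S *\<^sub>R complex_of_real (J (real p powr - real (multiplicity p c)))"
    using emeasure_Haar_zp_trunc_eq[OF assms(1,3)] sets_Haar_zp_trunc by (intro set_integral_const) auto
  also have "measure (Haar p) ?S = (1 / real p) ^ M"
    using emeasure_Haar_zp_trunc_eq[OF assms(1,3)] by (simp add: measure_def)
  finally show ?thesis
    by (simp add: scaleR_conv_of_real)
qed

lemma integral_radial_mult_zp_trunc:
  fixes J :: "real \<Rightarrow> real" and h :: "nat \<Rightarrow> complex"
  assumes "p > 0" "integrable (Haar p) (\<lambda>z. J (padic_abs p z))"
  shows "(\<integral>z. complex_of_real (J (padic_abs p z)) * h (zp_trunc p M z) \<partial>Haar p) =
    h 0 * (LINT z:{z \<in> space (Haar p). zp_trunc p M z = 0}|Haar p. complex_of_real (J (padic_abs p z)))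
    + complex_of_real ((1 / real p) ^ M) *
      (\<Sum>c<p ^ M. h c * radial_weight p (\<lambda>m. complex_of_real (J (real p powr - real m))) c)"
proof -
  let ?I = "\<lambda>c. LINT z:{z \<in> space (Haar p). zp_trunc p M z = c}|Haar p. complex_of_real (J (padic_abs p z))"
  let ?w = "\<lambda>m. complex_of_real (J (real p powr - real m))"
  have "(\<integral>z. complex_of_real (J (padic_abs p z)) * h (zp_trunc p M z) \<partial>Haar p) = (\<Sum>c<p ^ M. h c * ?I c)"
    using assms(2) by (intro integral_mult_zp_trunc integrable_of_real)
  also have "\<dots> = (\<Sum>c<p ^ M. (if c = 0 then h 0 * ?I 0 else 0) +
      complex_of_real ((1 / real p) ^ M) * (h c * radial_weight p ?w c))"
    using assms(1) by (intro sum.cong refl) (auto simp: radial_weight_def set_integral_radial_zp_trunc)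
  also have "\<dots> = h 0 * ?I 0 + complex_of_real ((1 / real p) ^ M) * (\<Sum>c<p ^ M. h c * radial_weight p ?w c)"
    using assms(1) by (simp add: sum.distrib sum_distrib_left)
  finally show ?thesis .
qed

lemma integral_Haar_convolution:
  fixes g \<phi> :: "(nat \<Rightarrow> nat) \<Rightarrow> complex"
  assumes "p > 0" "g \<in> borel_measurable (Haar p)" "\<phi> \<in> borel_measurable (Haar p)"
  shows "(\<integral>y. g (zp_sub p x y) * \<phi> y \<partial>Haar p) = (\<integral>z. g z * \<phi> (zp_sub p x z) \<partial>Haar p)"
proof -
  have "(\<integral>y. g (zp_sub p x y) * \<phi> y \<partial>Haar p) =
      (\<integral>y. g (zp_sub p x y) * \<phi> (zp_sub p x (zp_sub p x y)) \<partial>Haar p)"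
    by (intro Bochner_Integration.integral_cong refl) (simp add: zp_sub_zp_sub[OF assms(1)] space_Haar)
  also have "\<dots> = (\<integral>z. g z * \<phi> (zp_sub p x z) \<partial>Haar p)"
    using assms(2) measurable_compose[OF measurable_zp_sub[OF assms(1)] assms(3)]
    by (intro integral_Haar_zp_sub[OF assms(1), where f = "\<lambda>z. g z * \<phi> (zp_sub p x z)"]) simp
  finally show ?thesis .
qed

lemma integral_radial_wavelet_res:
  fixes J :: "real \<Rightarrow> real"
  assumes "p > 1" "\<not> int p dvd int k" "integrable (Haar p) (\<lambda>z. J (padic_abs p z))"
  shows "(\<integral>z. complex_of_real (J (padic_abs p z)) * wavelet_res p N k (u - int (zp_trunc p (Suc N) z)) \<partial>Haar p) =
    Jhat p J (Suc N) * wavelet_res p N k u"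
proof -
  define I0 where "I0 = (LINT z:{z \<in> space (Haar p). zp_trunc p (Suc N) z = 0}|Haar p. complex_of_real (J (padic_abs p z)))"
  define \<rho> where "\<rho> = complex_of_real ((1 / real p) ^ Suc N)"
  define w where "w m = complex_of_real (J (real p powr - real m))" for m
  have "p > 0"
    using assms(1) by simp
  have decomposition: "(\<integral>z. complex_of_real (J (padic_abs p z)) * h (zp_trunc p (Suc N) z) \<partial>Haar p) =
      h 0 * I0 + \<rho> * (\<Sum>c<p ^ Suc N. h c * radial_weight p w c)" for h
    unfolding I0_def \<rho>_def w_def by (rule integral_radial_mult_zp_trunc[OF \<open>p > 0\<close> assms(3)])
  note wavelet_sum = sum_radial_weight_wavelet_res[OF assms(1,2), of N u w]
  note char_sum = sum_radial_weight_cis[OF assms(1), of N w]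
  have "Jhat p J (Suc N) =
      (\<integral>z. complex_of_real (J (padic_abs p z)) * cis (2 * pi * real (zp_trunc p (Suc N) z) / real (p ^ Suc N)) \<partial>Haar p)"
    by (simp add: Jhat_def FT_Zp_def mult.commute)
  also have "\<dots> = I0 - \<rho> * w N"
    unfolding decomposition[of "\<lambda>c. cis (2 * pi * real c / real (p ^ Suc N))"] char_sum by simp
  finally have Jhat_eq: "Jhat p J (Suc N) = I0 - \<rho> * w N" .
  show ?thesis
    unfolding decomposition[of "\<lambda>c. wavelet_res p N k (u - int c)"] wavelet_sum Jhat_eq
    by (simp add: algebra_simps)
qed

lemma Jop_const_one:
  fixes J :: "real \<Rightarrow> real"
  assumes "p > 0" "integrable (Haar p) (\<lambda>z. J (padic_abs p z))" "(\<integral>z. J (padic_abs p z) \<partial>Haar p) = 1"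
  shows "Jop p J (\<lambda>_. 1) x = 0"
proof -
  have "(\<integral>y. complex_of_real (J (padic_abs p (zp_sub p x y))) \<partial>Haar p) =
      (\<integral>z. complex_of_real (J (padic_abs p z)) \<partial>Haar p)"
    using assms(1) borel_measurable_integrable[OF integrable_of_real[OF assms(2)]]
    by (rule integral_Haar_zp_sub)
  then show ?thesis
    using assms(3) by (simp add: Jop_def)
qed

lemma Jop_Psi_eq:
  fixes J :: "real \<Rightarrow> real"
  assumes "p > 1" "\<not> int p dvd int k" "r \<le> 0" "b \<in> QpZp p" "rat_in_Zp p (b * of_nat (p ^ nat (- r)))"
    and J: "integrable (Haar p) (\<lambda>z. J (padic_abs p z))" and x: "x \<in> space (Haar p)"
  shows "Jop p J (Psi p r b k) x = (Jhat p J (nat (1 - r)) - 1) * Psi p r b k x"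
proof -
  define N where "N = nat (- r)"
  define C where "C = complex_of_real (real p powr (- real_of_int r / 2))"
  have "p > 0"
    using assms(1) by simp
  obtain a where Psi_eq: "\<And>y. y \<in> space (Haar p) \<Longrightarrow>
      Psi p r b k y = C * wavelet_res p N k (int (zp_trunc p (Suc N) y) - int a)"
    using Psi_eq_wavelet_res[OF \<open>p > 0\<close> assms(3-5)] unfolding N_def C_def by blast
  define u where "u = int (zp_trunc p (Suc N) x) - int a"
  have Psi_sub: "Psi p r b k (zp_sub p x z) = C * wavelet_res p N k (u - int (zp_trunc p (Suc N) z))" for z
  proof -
    have "zp_sub p x z \<in> space (Haar p)"
      using zp_sub_digit_less[OF \<open>p > 0\<close>] by (simp add: space_Haar)
    moreover have "(int (zp_trunc p (Suc N) (zp_sub p x z)) - int a) mod int p ^ Suc N =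
        (u - int (zp_trunc p (Suc N) z)) mod int p ^ Suc N"
      by (simp add: zp_trunc_zp_sub[OF \<open>p > 0\<close>] u_def mod_diff_left_eq algebra_simps)
    ultimately show ?thesis
      by (metis Psi_eq wavelet_res_mod[OF \<open>p > 0\<close>])
  qed
  have J_measurable: "(\<lambda>z. complex_of_real (J (padic_abs p z))) \<in> borel_measurable (Haar p)"
    using J by (intro borel_measurable_integrable integrable_of_real)
  have "(\<integral>y. complex_of_real (J (padic_abs p (zp_sub p x y))) * Psi p r b k y \<partial>Haar p) =
      (\<integral>z. complex_of_real (J (padic_abs p z)) * Psi p r b k (zp_sub p x z) \<partial>Haar p)"
    by (rule integral_Haar_convolution[OF \<open>p > 0\<close> J_measurable Psi_measurable[OF \<open>p > 0\<close> assms(3-5)]])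
  also have "\<dots> = C * (\<integral>z. complex_of_real (J (padic_abs p z)) *
      wavelet_res p N k (u - int (zp_trunc p (Suc N) z)) \<partial>Haar p)"
    by (simp add: Psi_sub mult.left_commute[of _ C])
  also have "\<dots> = C * (Jhat p J (Suc N) * wavelet_res p N k u)"
    by (simp add: integral_radial_wavelet_res[OF assms(1,2) J])
  finally have "(\<integral>y. complex_of_real (J (padic_abs p (zp_sub p x y))) * Psi p r b k y \<partial>Haar p) =
      Jhat p J (Suc N) * Psi p r b k x"
    using Psi_eq[OF x] by (simp add: u_def)
  moreover have "nat (1 - r) = Suc N"
    using assms(3) by (simp add: N_def)
  ultimately show ?thesis
    unfolding Jop_def by (simp add: algebra_simps)
qed

theorem lemma7:
  fixes p :: nat and J :: "real \<Rightarrow> real"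
  assumes "prime p"
    and "\<forall>t\<in>{0..1}. J t \<ge> 0"
    and "integrable (Haar p) (\<lambda>x. J (padic_abs p x))"
    and "(\<integral>x. J (padic_abs p x) \<partial>Haar p) = 1"
  shows "(\<forall>k r b. k \<in> {1..p - 1} \<and> r \<le> 0 \<and> b \<in> QpZp p \<and> rat_in_Zp p (b * of_nat (p ^ nat (- r)))
            \<longrightarrow> (\<forall>x\<in>space (Haar p).
                  Jop p J (Psi p r b k) x = (Jhat p J (nat (1 - r)) - 1) * Psi p r b k x))
       \<and> (\<forall>x\<in>space (Haar p). Jop p J (\<lambda>_. 1) x = 0)"
proof (intro conjI allI impI ballI)
  have "p > 1"
    using assms(1) by (rule prime_gt_1_nat)
  fix k r b x
  assume "k \<in> {1..p - 1} \<and> r \<le> 0 \<and> b \<in> QpZp p \<and> rat_in_Zp p (b * of_nat (p ^ nat (- r)))"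
    and "x \<in> space (Haar p)"
  moreover have "\<not> int p dvd int k" if "k \<in> {1..p - 1}"
    using that by (auto dest: dvd_imp_le)
  ultimately show "Jop p J (Psi p r b k) x = (Jhat p J (nat (1 - r)) - 1) * Psi p r b k x"
    using Jop_Psi_eq[OF \<open>p > 1\<close> _ _ _ _ assms(3)] by blast
next
  fix x
  show "Jop p J (\<lambda>_. 1) x = 0"
    using Jop_const_one[OF _ assms(3,4)] prime_gt_0_nat[OF assms(1)] by blast
qed

end
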